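(* Let $T$ be a finite tree and let $P=p_0p_1\dots p_k$ ($k\ge1$) be a path in $T$ such that each of $p_1,\dots,p_{k-1}$ has degree $2$ in $T$. Let $B$ be the vertex set of the component containing $p_k$ of the graph obtained from $T$ by deleting the edges of $P$. Let $T'$ be the tree obtained from $T$ by deleting all edges between $p_k$ and $\Gamma(p_k)\setminus\{p_{k-1}\}$ and adding the edges between $p_0$ and $\Gamma(p_k)\setminus\{p_{k-1}\}$ instead. If $k$ is odd, then for every $\ell\ge1$, \[\omega_{\ell}(p_0,T[B\cup P])-\omega_{\ell}(p_0,P)\leq \omega_{\ell}(p_0,T'[B\cup P])-\omega_{\ell}(p_0,P).\]
   Context: $\Gamma(v)$ is the set of neighbours of $v$ in $T$. For a graph $G$ containing the vertices of $B$ and $P$, $G[B\cup P]$ is the subgraph of $G$ induced by $B\cup\{p_0,\dots,p_k\}$. For a graph $G$, a vertex $x$ and $\ell\ge1$, $\omega_\ell(x,G)$ is the number of walks of length $\ell$ in $G$ starting at $x$. $P$ is regarded as a graph (the path). *)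

theory Defs
  imports Main
begin

definition simple_graph :: "'a set \<Rightarrow> 'a set set \<Rightarrow> bool" where
  "simple_graph V E \<longleftrightarrow> finite V \<and>
     (\<forall>e\<in>E. \<exists>u v. e = {u, v} \<and> u \<noteq> v \<and> u \<in> V \<and> v \<in> V)"

definition walk :: "'a set set \<Rightarrow> 'a list \<Rightarrow> bool" where
  "walk E xs \<longleftrightarrow> (\<forall>i. Suc i < length xs \<longrightarrow> {xs ! i, xs ! Suc i} \<in> E)"

definition reachable :: "'a set set \<Rightarrow> 'a \<Rightarrow> 'a \<Rightarrow> bool" where
  "reachable E u v \<longleftrightarrow> (\<exists>xs. xs \<noteq> [] \<and> hd xs = u \<and> last xs = v \<and> walk E xs)"

definition connected_graph :: "'a set \<Rightarrow> 'a set set \<Rightarrow> bool" where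
  "connected_graph V E \<longleftrightarrow> (\<forall>u\<in>V. \<forall>v\<in>V. reachable E u v)"

definition has_cycle :: "'a set set \<Rightarrow> bool" where
  "has_cycle E \<longleftrightarrow> (\<exists>cs. length cs \<ge> 3 \<and> distinct cs \<and> walk E cs \<and> {last cs, hd cs} \<in> E)"

definition is_tree :: "'a set \<Rightarrow> 'a set set \<Rightarrow> bool" where
  "is_tree V E \<longleftrightarrow> simple_graph V E \<and> V \<noteq> {} \<and> connected_graph V E \<and> \<not> has_cycle E"

definition nbrs :: "'a set set \<Rightarrow> 'a \<Rightarrow> 'a set" where
  "nbrs E v = {u. {u, v} \<in> E}"

definition degree :: "'a set set \<Rightarrow> 'a \<Rightarrow> nat" where
  "degree E v = card (nbrs E v)"

definition is_path :: "'a set \<Rightarrow> 'a set set \<Rightarrow> 'a list \<Rightarrow> bool" where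
  "is_path V E ps \<longleftrightarrow> ps \<noteq> [] \<and> distinct ps \<and> set ps \<subseteq> V \<and> walk E ps"

definition path_edges :: "'a list \<Rightarrow> 'a set set" where
  "path_edges ps = {{ps ! i, ps ! Suc i} | i. Suc i < length ps}"

definition component :: "'a set \<Rightarrow> 'a set set \<Rightarrow> 'a \<Rightarrow> 'a set" where
  "component V E v = {u \<in> V. reachable E v u}"

definition induced :: "'a set set \<Rightarrow> 'a set \<Rightarrow> 'a set set" where
  "induced E S = {e \<in> E. e \<subseteq> S}"

text \<open>Number of walks of length l (l edges) starting at x.\<close>
definition num_walks :: "nat \<Rightarrow> 'a \<Rightarrow> 'a set set \<Rightarrow> nat" where
  "num_walks l x E = card {xs. length xs = Suc l \<and> hd xs = x \<and> walk E xs}"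

text \<open>T': move the edges from p_k to Gamma(p_k) - {p_(k-1)} over to p_0.\<close>
definition moved_edges :: "'a set set \<Rightarrow> 'a \<Rightarrow> 'a \<Rightarrow> 'a \<Rightarrow> 'a set set" where
  "moved_edges E p0 pk1 pk =
     (E - {{pk, u} | u. u \<in> nbrs E pk - {pk1}}) \<union> {{p0, u} | u. u \<in> nbrs E pk - {pk1}}"

end

theory Submission
  imports Defs
begin

text \<open>
  In G = T[B \<union> P] the only neighbour of p 0 is p 1, so walks of length l from p 0 are
  walks of length l - 1 from p 1. Pick a neighbour b of p k in B (if there is none, T' = T).
  Since k is odd, the path p 0 \<dots> p k b has a middle vertex p c, and reflecting the part
  of a walk from p 1 before its first visit to p c injects walks from p 1 into walks from
  p k. A walk of length l - 1 from p k extends to one of length l, and reversing P maps G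
  into G' = T'[B \<union> P] sending p k to p 0. Hence p 0 has at least as many walks in G' as
  in G, and the term for P cancels.
\<close>


lemma walk_Nil [simp]: "walk F []"
  and walk_singleton [simp]: "walk F [x]"
  by (simp_all add: walk_def)

lemma walk_Cons_Cons [simp]: "walk F (x # y # xs) \<longleftrightarrow> {x, y} \<in> F \<and> walk F (y # xs)"
  unfolding walk_def
proof safe
  fix i assume "\<forall>i. Suc i < length (x # y # xs) \<longrightarrow> {(x # y # xs) ! i, (x # y # xs) ! Suc i} \<in> F"
  from this[rule_format, of 0] this[rule_format, of "Suc i"]
  show "{x, y} \<in> F" "Suc i < length (y # xs) \<Longrightarrow> {(y # xs) ! i, (y # xs) ! Suc i} \<in> F"
    by simp_all
next
  fix i assume "{x, y} \<in> F" "\<forall>i. Suc i < length (y # xs) \<longrightarrow> {(y # xs) ! i, (y # xs) ! Suc i} \<in> F"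
    and "Suc i < length (x # y # xs)"
  then show "{(x # y # xs) ! i, (x # y # xs) ! Suc i} \<in> F"
    by (cases i) auto
qed

lemma walk_Cons: "walk F (x # xs) \<longleftrightarrow> xs = [] \<or> {x, hd xs} \<in> F \<and> walk F xs"
  by (cases xs) auto

lemma walk_append:
  "walk F (xs @ ys) \<longleftrightarrow> walk F xs \<and> walk F ys \<and> (xs \<noteq> [] \<and> ys \<noteq> [] \<longrightarrow> {last xs, hd ys} \<in> F)"
  by (induction xs) (auto simp: walk_Cons)

lemma walk_rev: "walk F xs \<Longrightarrow> walk F (rev xs)"
  by (induction xs) (auto simp: walk_append walk_Cons insert_commute hd_rev last_rev)

lemma walk_mono: "walk F xs \<Longrightarrow> F \<subseteq> F' \<Longrightarrow> walk F' xs"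
  unfolding walk_def by blast

lemma walk_map:
  "walk F xs \<Longrightarrow> (\<And>u v. {u, v} \<in> F \<Longrightarrow> {f u, f v} \<in> F') \<Longrightarrow> walk F' (map f xs)"
  by (induction xs) (auto simp: walk_Cons hd_map)

lemma set_walk_subset: "walk F xs \<Longrightarrow> xs \<noteq> [] \<Longrightarrow> set xs \<subseteq> insert (hd xs) (\<Union>F)"
  by (induction xs rule: induct_list012) auto

lemma distinct_subwalkE:
  assumes "xs \<noteq> []" "walk F xs"
  obtains ys where "ys \<noteq> []" "distinct ys" "hd ys = hd xs" "last ys = last xs" "walk F ys"
  using assms
proof (induction "length xs" arbitrary: xs rule: less_induct)
  case less
  show ?case
  proof (cases "distinct xs")
    case True
    with less.prems show ?thesis by blast
  next
    case False
    then obtain as y bs cs where xs: "xs = as @ [y] @ bs @ [y] @ cs"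
      using not_distinct_decomp by blast
    have "walk F ((as @ y # bs) @ y # cs)"
      using less.prems(3) unfolding xs by simp
    then have "walk F (y # cs)" "walk F (as @ [y])"
      unfolding walk_append by auto
    then have "walk F (as @ y # cs)"
      unfolding walk_append by auto
    moreover have "hd (as @ y # cs) = hd xs" "last (as @ y # cs) = last xs"
      unfolding xs by (cases as; cases cs; simp)+
    moreover have "length (as @ y # cs) < length xs"
      unfolding xs by simp
    ultimately show ?thesis
      using less.hyps less.prems(1) by (metis Nil_is_append_conv list.distinct(1))
  qed
qed

lemma reachable_refl: "reachable F u u"
  unfolding reachable_def by (rule exI[of _ "[u]"]) simp

lemma reachable_edge: "{u, v} \<in> F \<Longrightarrow> reachable F u v"
  unfolding reachable_def by (rule exI[of _ "[u, v]"]) simp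

lemma reachable_sym: "reachable F u v \<Longrightarrow> reachable F v u"
  unfolding reachable_def by (metis walk_rev Nil_is_rev_conv hd_rev last_rev)

lemma reachable_trans:
  assumes "reachable F u v" "reachable F v w"
  shows "reachable F u w"
proof -
  obtain xs where xs: "xs \<noteq> []" "hd xs = u" "last xs = v" "walk F xs"
    using assms(1) reachable_def by metis
  obtain ys where ys: "ys \<noteq> []" "hd ys = v" "last ys = w" "walk F ys"
    using assms(2) reachable_def by metis
  have "walk F (xs @ tl ys)" "last (xs @ tl ys) = w"
    using xs ys by (cases ys; cases "tl ys"; auto simp: walk_append walk_Cons)+
  then show ?thesis
    unfolding reachable_def using xs by (metis append_is_Nil_conv hd_append2)
qed

lemma reachable_mono: "reachable F u v \<Longrightarrow> F \<subseteq> F' \<Longrightarrow> reachable F' u v"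
  unfolding reachable_def using walk_mono by metis

lemma reachable_last_edge:
  assumes "reachable F u w" "u \<noteq> w"
  obtains v where "{v, w} \<in> F"
proof -
  obtain xs where xs: "xs \<noteq> []" "hd xs = w" "last xs = u" "walk F xs"
    using reachable_sym[OF assms(1)] reachable_def by metis
  then obtain ys where "xs = w # ys" by (cases xs) auto
  with xs assms(2) that show ?thesis
    by (cases ys) (auto simp: insert_commute)
qed

lemma has_cycle_if_reachable_without_edge:
  assumes "{a, b} \<in> E" "a \<noteq> b" "reachable (E - {{a, b}}) a b"
  shows "has_cycle E"
proof -
  obtain xs where xs: "xs \<noteq> []" "hd xs = a" "last xs = b" "walk (E - {{a, b}}) xs"
    using assms(3) reachable_def by metis
  obtain cs where cs: "cs \<noteq> []" "distinct cs" "hd cs = a" "last cs = b"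
      and walk_cs: "walk (E - {{a, b}}) cs"
    using distinct_subwalkE[OF xs(1,4)] xs(2,3) by metis
  have "length cs \<ge> 3"
  proof (rule ccontr)
    assume "\<not> 3 \<le> length cs"
    then consider "cs = [a]" | "cs = [a, b]"
      using cs(1,3,4) by (cases cs; cases "tl cs"; cases "tl (tl cs)"; auto)
    then show False
      using cs walk_cs assms(2) by cases auto
  qed
  moreover have "walk E cs"
    using walk_cs walk_mono by blast
  ultimately show ?thesis
    unfolding has_cycle_def using cs assms(1) by (auto simp: insert_commute)
qed

definition walks :: "nat \<Rightarrow> 'a \<Rightarrow> 'a set set \<Rightarrow> 'a list set" where
  "walks l x F = {xs. length xs = Suc l \<and> hd xs = x \<and> walk F xs}"

lemma num_walks_eq_card: "num_walks l x F = card (walks l x F)"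
  unfolding num_walks_def walks_def ..

lemma finite_walks:
  assumes "finite (\<Union>F)"
  shows "finite (walks l x F)"
proof (rule finite_subset)
  show "walks l x F \<subseteq> {xs. set xs \<subseteq> insert x (\<Union>F) \<and> length xs = Suc l}"
    unfolding walks_def using set_walk_subset by fastforce
  show "finite {xs. set xs \<subseteq> insert x (\<Union>F) \<and> length xs = Suc l}"
    using finite_lists_length_eq assms by blast
qed

lemma num_walks_le_inj:
  assumes "finite (\<Union>F')" "inj_on f (walks l x F)" "f ` walks l x F \<subseteq> walks l' y F'"
  shows "num_walks l x F \<le> num_walks l' y F'"
  unfolding num_walks_eq_card using card_inj_on_le[OF assms(2,3) finite_walks[OF assms(1)]] .

lemma num_walks_le_Suc:
  assumes "finite (\<Union>F)" and "{x, y} \<in> F"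
  shows "num_walks l x F \<le> num_walks (Suc l) x F"
proof -
  have has_next: "\<exists>w. {last xs, w} \<in> F" if "xs \<in> walks l x F" for xs
  proof (cases "length xs = 1")
    case True
    with that show ?thesis
      using assms(2) unfolding walks_def by (cases xs) auto
  next
    case False
    with that have xs: "xs = butlast xs @ [last xs]" "butlast xs \<noteq> []" "walk F xs"
      unfolding walks_def by (auto simp flip: length_greater_0_conv)
    then have "{last (butlast xs), last xs} \<in> F"
      using walk_append[of F "butlast xs" "[last xs]"] by simp
    then show ?thesis
      by (metis insert_commute)
  qed
  have step: "{last xs, (SOME w. {last xs, w} \<in> F)} \<in> F" if "xs \<in> walks l x F" for xs
    using someI_ex[OF has_next[OF that]] .
  show ?thesis
  proof (rule num_walks_le_inj[OF assms(1)])
    show "inj_on (\<lambda>xs. xs @ [SOME w. {last xs, w} \<in> F]) (walks l x F)"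
      by (rule inj_onI) simp
    show "(\<lambda>xs. xs @ [SOME w. {last xs, w} \<in> F]) ` walks l x F \<subseteq> walks (Suc l) x F"
      using step by (auto simp: walks_def walk_append simp flip: length_greater_0_conv)
  qed
qed

lemma num_walks_Suc_le_unique_nbr:
  assumes "finite (\<Union>F)" and "\<And>v. {x, v} \<in> F \<Longrightarrow> v = y"
  shows "num_walks (Suc l) x F \<le> num_walks l y F"
proof (rule num_walks_le_inj[OF assms(1)])
  show "inj_on tl (walks (Suc l) x F)"
    by (rule inj_onI) (auto simp: walks_def intro: list.expand)
  show "tl ` walks (Suc l) x F \<subseteq> walks l y F"
  proof
    fix ys assume "ys \<in> tl ` walks (Suc l) x F"
    then obtain z zs where "ys = z # zs" "length zs = l" "{x, z} \<in> F" "walk F (z # zs)"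
      unfolding walks_def by (auto simp: length_Suc_conv)
    with assms(2) show "ys \<in> walks l y F"
      unfolding walks_def by auto
  qed
qed

lemma num_walks_le_hom:
  assumes "finite (\<Union>F')" "inj f" "\<And>u v. {u, v} \<in> F \<Longrightarrow> {f u, f v} \<in> F'"
  shows "num_walks l x F \<le> num_walks l (f x) F'"
proof (rule num_walks_le_inj[OF assms(1)])
  show "inj_on (map f) (walks l x F)"
    using inj_mapI[OF assms(2)] by (rule inj_on_subset) simp
  show "map f ` walks l x F \<subseteq> walks l (f x) F'"
    using walk_map[of F _ f F', OF _ assms(3)] by (auto simp: walks_def hd_map simp flip: length_greater_0_conv)
qed

fun map_until :: "('a \<Rightarrow> 'a) \<Rightarrow> 'a \<Rightarrow> 'a list \<Rightarrow> 'a list" where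
  "map_until f z [] = []"
| "map_until f z (x # xs) = (if x = z then x # xs else f x # map_until f z xs)"

lemma length_map_until [simp]: "length (map_until f z xs) = length xs"
  by (induction xs) auto

lemma map_until_map_until:
  assumes "\<And>v. f (f v) = v" "f z = z"
  shows "map_until f z (map_until f z xs) = xs"
proof (induction xs)
  case (Cons x xs)
  have "f x \<noteq> z" if "x \<noteq> z"
    using that assms by metis
  with Cons show ?case
    using assms(1) by auto
qed simp

lemma walk_map_until:
  assumes closed: "\<And>u v. u \<in> L \<Longrightarrow> {u, v} \<in> F \<Longrightarrow> (v \<in> L \<or> v = z) \<and> {f u, f v} \<in> F"
    and "z \<notin> L" "f z = z"
  shows "walk F xs \<Longrightarrow> xs \<noteq> [] \<Longrightarrow> hd xs \<in> L \<Longrightarrow>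
    walk F (map_until f z xs) \<and> hd (map_until f z xs) = f (hd xs)"
proof (induction xs rule: induct_list012)
  case (3 x y xs)
  then have "x \<noteq> z" "(y \<in> L \<or> y = z) \<and> {f x, f y} \<in> F"
    using closed assms(2) by auto
  with 3 show ?case
    using assms(3) by (cases "y = z") auto
qed (use assms(2) in auto)

lemma num_walks_le_reflect:
  assumes "finite (\<Union>F)" "\<And>v. f (f v) = v" "f z = z"
    and "\<And>u v. u \<in> L \<Longrightarrow> {u, v} \<in> F \<Longrightarrow> (v \<in> L \<or> v = z) \<and> {f u, f v} \<in> F"
    and "z \<notin> L" "x \<in> L"
  shows "num_walks l x F \<le> num_walks l (f x) F"
proof (rule num_walks_le_inj[OF assms(1)])
  show "inj_on (map_until f z) (walks l x F)"
    by (metis inj_onI map_until_map_until assms(2,3))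
  show "map_until f z ` walks l x F \<subseteq> walks l (f x) F"
    using walk_map_until[OF assms(4,5,3)] assms(6)
    by (auto simp: walks_def simp flip: length_greater_0_conv)
qed

definition list_flip :: "'a list \<Rightarrow> 'a \<Rightarrow> 'a" where
  "list_flip zs v = (if v \<in> set zs then rev zs ! (THE i. i < length zs \<and> zs ! i = v) else v)"

lemma list_flip_nth:
  assumes "distinct zs" "i < length zs"
  shows "list_flip zs (zs ! i) = zs ! (length zs - Suc i)"
proof -
  have "(THE j. j < length zs \<and> zs ! j = zs ! i) = i"
    using assms by (auto simp: nth_eq_iff_index_eq)
  then show ?thesis
    using assms by (simp add: list_flip_def rev_nth)
qed

lemma list_flip_notin: "v \<notin> set zs \<Longrightarrow> list_flip zs v = v"
  by (simp add: list_flip_def)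

lemma list_flip_list_flip:
  assumes "distinct zs"
  shows "list_flip zs (list_flip zs v) = v"
proof (cases "v \<in> set zs")
  case True
  then obtain i where "i < length zs" "v = zs ! i"
    by (metis in_set_conv_nth)
  then show ?thesis
    using list_flip_nth[OF assms] by (simp add: Suc_diff_Suc)
qed (simp add: list_flip_notin)

lemma inj_list_flip: "distinct zs \<Longrightarrow> inj (list_flip zs)"
  by (metis injI list_flip_list_flip)

lemma list_flip_path_edges:
  assumes "distinct zs" "e \<in> path_edges zs"
  shows "list_flip zs ` e \<in> path_edges zs"
proof -
  obtain i where i: "e = {zs ! i, zs ! Suc i}" "Suc i < length zs"
    using assms(2) unfolding path_edges_def by blast
  define j where "j = length zs - Suc (Suc i)"
  have "list_flip zs ` e = {zs ! j, zs ! Suc j}" "Suc j < length zs"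
    using i list_flip_nth[OF assms(1)] unfolding j_def by (auto simp: Suc_diff_Suc)
  then show ?thesis
    unfolding path_edges_def by blast
qed

lemma simple_graph_edgeD:
  assumes "simple_graph V E" "{u, v} \<in> E"
  shows "u \<noteq> v \<and> u \<in> V \<and> v \<in> V"
proof -
  obtain a b where "{u, v} = {a, b}" "a \<noteq> b" "a \<in> V" "b \<in> V"
    using assms unfolding simple_graph_def by blast
  then show ?thesis
    by (auto simp: doubleton_eq_iff)
qed

lemma finite_nbrs: "simple_graph V E \<Longrightarrow> finite (nbrs E v)"
proof -
  assume G: "simple_graph V E"
  have "nbrs E v \<subseteq> V"
    unfolding nbrs_def using simple_graph_edgeD[OF G] by blast
  with G show ?thesis
    unfolding simple_graph_def by (blast intro: finite_subset)
qed

lemma finite_Union_induced: "finite S \<Longrightarrow> finite (\<Union>(induced F S))"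
  unfolding induced_def by (blast intro: finite_subset)

lemma path_edges_subset_set: "e \<in> path_edges xs \<Longrightarrow> e \<subseteq> set xs"
  unfolding path_edges_def by auto

lemma path_edges_subset_if_walk: "walk F xs \<Longrightarrow> path_edges xs \<subseteq> F"
  unfolding path_edges_def walk_def by blast

lemma path_edges_snoc:
  assumes "xs \<noteq> []"
  shows "path_edges (xs @ [b]) = insert {last xs, b} (path_edges xs)"
proof (intro equalityI subsetI)
  fix e assume "e \<in> path_edges (xs @ [b])"
  then obtain i where e: "e = {(xs @ [b]) ! i, (xs @ [b]) ! Suc i}" "i < length xs"
    unfolding path_edges_def by auto
  show "e \<in> insert {last xs, b} (path_edges xs)"
  proof (cases "Suc i < length xs")
    case True
    then have "e = {xs ! i, xs ! Suc i}"
      using e by (simp add: nth_append)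
    with True show ?thesis
      unfolding path_edges_def by blast
  next
    case False
    then have "i = length xs - 1"
      using e(2) by simp
    with e assms show ?thesis
      by (simp add: nth_append last_conv_nth)
  qed
next
  fix e assume "e \<in> insert {last xs, b} (path_edges xs)"
  then consider "e = {last xs, b}" | i where "e = {xs ! i, xs ! Suc i}" "Suc i < length xs"
    unfolding path_edges_def by blast
  then show "e \<in> path_edges (xs @ [b])"
  proof cases
    case 1
    obtain n where n: "length xs = Suc n"
      using assms by (cases xs) auto
    with 1 have "e = {(xs @ [b]) ! n, (xs @ [b]) ! Suc n}"
      using assms by (simp add: nth_append last_conv_nth)
    moreover have "Suc n < length (xs @ [b])"
      using n by simp
    ultimately show ?thesis
      unfolding path_edges_def by blast
  next
    case (2 i)
    then have "e = {(xs @ [b]) ! i, (xs @ [b]) ! Suc i}" "Suc i < length (xs @ [b])"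
      by (simp_all add: nth_append)
    then show ?thesis
      unfolding path_edges_def by blast
  qed
qed

locale bare_path_in_tree =
  fixes V :: "'a set" and E :: "'a set set" and ps :: "'a list" and k :: nat
  assumes tree: "is_tree V E"
    and path: "is_path V E ps" and length_ps: "length ps = Suc k" and k_pos: "1 \<le> k"
    and inner_degree: "\<And>i. 1 \<le> i \<Longrightarrow> i \<le> k - 1 \<Longrightarrow> degree E (ps ! i) = 2"
begin

abbreviation p :: "nat \<Rightarrow> 'a" where "p i \<equiv> ps ! i"

definition B :: "'a set" where "B = component V (E - path_edges ps) (p k)"

definition N :: "'a set" where "N = nbrs E (p k) - {p (k - 1)}"

definition E' :: "'a set set" where "E' = moved_edges E (p 0) (p (k - 1)) (p k)"

definition S :: "'a set" where "S = B \<union> set ps"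

abbreviation G :: "'a set set" where "G \<equiv> induced E S"

abbreviation G' :: "'a set set" where "G' \<equiv> induced E' S"

lemma simple: "simple_graph V E"
  and acyclic: "\<not> has_cycle E"
  using tree unfolding is_tree_def by simp_all

lemma edgeD: "{u, v} \<in> E \<Longrightarrow> u \<noteq> v \<and> u \<in> V \<and> v \<in> V"
  using simple_graph_edgeD[OF simple] .

lemma distinct_ps: "distinct ps"
  using path unfolding is_path_def by simp

lemma p_eq_iff: "i \<le> k \<Longrightarrow> j \<le> k \<Longrightarrow> p i = p j \<longleftrightarrow> i = j"
  using path length_ps unfolding is_path_def by (simp add: nth_eq_iff_index_eq)

lemma p_in_set: "i \<le> k \<Longrightarrow> p i \<in> set ps"
  using length_ps by simp

lemma in_set_psE:
  assumes "v \<in> set ps"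
  obtains i where "i \<le> k" "v = p i"
  using assms length_ps by (metis in_set_conv_nth less_Suc_eq_le)

lemma path_edges_subset_E: "path_edges ps \<subseteq> E"
  using path path_edges_subset_if_walk unfolding is_path_def by blast

lemma path_edge: "i < k \<Longrightarrow> {p i, p (Suc i)} \<in> path_edges ps"
  using length_ps unfolding path_edges_def by auto

lemma path_edges_at:
  assumes "{p i, v} \<in> path_edges ps" "i \<le> k"
  shows "i < k \<and> v = p (Suc i) \<or> 0 < i \<and> v = p (i - 1)"
proof -
  obtain j where j: "{p i, v} = {p j, p (Suc j)}" "j < k"
    using assms(1) length_ps unfolding path_edges_def by auto
  then have "i = j \<and> v = p (Suc j) \<or> i = Suc j \<and> v = p j"
    using p_eq_iff[of i j] p_eq_iff[of i "Suc j"] assms(2) by (auto simp: doubleton_eq_iff)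
  with j(2) show ?thesis
    by auto
qed

lemma inner_nbr:
  assumes "0 < i" "i < k" "{p i, v} \<in> E"
  shows "v = p (i - 1) \<or> v = p (Suc i)"
proof -
  have known: "{p (i - 1), p (Suc i)} \<subseteq> nbrs E (p i)"
    using path_edge[of "i - 1"] path_edge[of i] path_edges_subset_E assms(1,2)
    by (auto simp: nbrs_def insert_commute)
  have "card {p (i - 1), p (Suc i)} = 2"
    using p_eq_iff[of "i - 1" "Suc i"] assms(2) by simp
  also have "\<dots> = card (nbrs E (p i))"
    using inner_degree[of i] assms(1,2) by (simp add: degree_def)
  finally have "{p (i - 1), p (Suc i)} = nbrs E (p i)"
    using card_subset_eq[OF finite_nbrs[OF simple] known] by simp
  with assms(3) show ?thesis
    by (auto simp: nbrs_def insert_commute)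
qed

lemma inner_edge_in_path_edges:
  assumes "0 < i" "i < k" "{p i, v} \<in> E"
  shows "{p i, v} \<in> path_edges ps"
  using inner_nbr[OF assms] path_edge[of "i - 1"] path_edge[of i] assms(1,2)
  by (auto simp: insert_commute)

lemma pk_in_B: "p k \<in> B"
  using p_in_set[of k] path reachable_refl unfolding B_def component_def is_path_def by auto

lemma B_subset_V: "B \<subseteq> V"
  unfolding B_def component_def by auto

lemma B_closed:
  assumes "u \<in> B" "{u, v} \<in> E" "{u, v} \<notin> path_edges ps"
  shows "v \<in> B"
proof -
  have "reachable (E - path_edges ps) (p k) u"
    using assms(1) unfolding B_def component_def by simp
  moreover have "reachable (E - path_edges ps) u v"
    using assms(2,3) by (simp add: reachable_edge)
  ultimately show ?thesis
    using edgeD[OF assms(2)] reachable_trans unfolding B_def component_def by fastforce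
qed

lemma p0_notin_B: "p 0 \<notin> B"
proof
  assume "p 0 \<in> B"
  define e where "e = {p (k - 1), p k}"
  have e_path: "e \<in> path_edges ps"
    using path_edge[of "k - 1"] k_pos by (simp add: e_def)
  \<comment> \<open>the path p 0 \<dots> p (k - 1) and an off-path route from p k to p 0 join the ends of e\<close>
  have to_p0: "reachable (E - {e}) (p j) (p 0)" if "j \<le> k - 1" for j
    using that
  proof (induction j)
    case (Suc j)
    have "{p j, p (Suc j)} \<in> E"
      using path_edge[of j] path_edges_subset_E Suc.prems by auto
    moreover have "p j \<noteq> p (k - 1)" "p j \<noteq> p k"
      using p_eq_iff[of j "k - 1"] p_eq_iff[of j k] Suc.prems by auto
    then have "{p j, p (Suc j)} \<noteq> e"
      unfolding e_def by blast
    ultimately have "reachable (E - {e}) (p (Suc j)) (p j)"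
      by (metis Diff_iff singletonD reachable_edge reachable_sym)
    with Suc show ?case
      using reachable_trans by simp
  qed (simp add: reachable_refl)
  have "reachable (E - {e}) (p k) (p 0)"
  proof (rule reachable_mono)
    show "reachable (E - path_edges ps) (p k) (p 0)"
      using \<open>p 0 \<in> B\<close> unfolding B_def component_def by simp
    show "E - path_edges ps \<subseteq> E - {e}"
      using e_path by blast
  qed
  then have "reachable (E - {e}) (p (k - 1)) (p k)"
    using reachable_trans[OF to_p0[of "k - 1"] reachable_sym] by simp
  moreover have "e \<in> E" "p (k - 1) \<noteq> p k"
    using e_path path_edges_subset_E p_eq_iff[of "k - 1" k] k_pos by auto
  ultimately have "has_cycle E"
    unfolding e_def by (intro has_cycle_if_reachable_without_edge)
  with acyclic show False ..
qed

lemma p_notin_B: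
  assumes "i < k"
  shows "p i \<notin> B"
proof
  assume "p i \<in> B"
  then have "reachable (E - path_edges ps) (p k) (p i)"
    unfolding B_def component_def by simp
  then obtain v where "{v, p i} \<in> E - path_edges ps"
    using p_eq_iff[of k i] assms by (auto elim: reachable_last_edge)
  with assms p0_notin_B \<open>p i \<in> B\<close> show False
    using inner_edge_in_path_edges[of i v] by (cases "i = 0") (auto simp: insert_commute)
qed

lemma B_inter_set_ps: "v \<in> B \<Longrightarrow> v \<in> set ps \<Longrightarrow> v = p k"
  by (metis in_set_psE le_neq_implies_less p_notin_B)

lemma off_path_edge_in_B:
  assumes "e \<in> E" "e \<subseteq> S" "e \<notin> path_edges ps"
  obtains u v where "e = {u, v}" "u \<in> B" "v \<in> B"
proof -
  obtain u v where e: "e = {u, v}" "u \<noteq> v"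
    using assms(1) simple unfolding simple_graph_def by blast
  \<comment> \<open>the only vertex of S outside B that has an edge off the path is p 0\<close>
  have outside_B: "w = p 0" if "w \<in> e" "w \<notin> B" for w
  proof -
    have e': "e = {w, if w = u then v else u}"
      using e that(1) by auto
    have "w \<in> set ps"
      using that assms(2) unfolding S_def by blast
    then obtain i where i: "i \<le> k" "w = p i"
      by (rule in_set_psE)
    have "i < k"
      using i that(2) pk_in_B le_neq_implies_less by blast
    then have "i = 0"
      using inner_edge_in_path_edges[of i "if w = u then v else u"] assms(1,3) e' i by auto
    with i show ?thesis
      by simp
  qed
  have iff: "u \<in> B \<longleftrightarrow> v \<in> B"
    using B_closed[of u v] B_closed[of v u] assms(1,3) e(1) by (auto simp: insert_commute)
  have "u \<in> B"
  proof (rule ccontr)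
    assume "u \<notin> B"
    then have "u = p 0" "v = p 0"
      using iff outside_B e(1) by auto
    with e(2) show False
      by simp
  qed
  with iff e(1) that show ?thesis
    by simp
qed

lemma N_in_B: "u \<in> N \<Longrightarrow> u \<in> B"
  and N_notin_set_ps: "u \<in> N \<Longrightarrow> u \<notin> set ps"
  and edge_pk_N: "u \<in> N \<Longrightarrow> {p k, u} \<in> E"
proof -
  assume "u \<in> N"
  then have edge: "{p k, u} \<in> E" "u \<noteq> p (k - 1)"
    unfolding N_def nbrs_def by (auto simp: insert_commute)
  then have "{p k, u} \<notin> path_edges ps"
    using path_edges_at[of k u] by auto
  then show uB: "u \<in> B"
    using B_closed pk_in_B edge by blast
  show "u \<notin> set ps"
    using B_inter_set_ps[OF uB] edgeD[OF edge(1)] by auto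
  show "{p k, u} \<in> E"
    using edge by simp
qed

lemma E'_eq: "E' = (E - {{p k, u} | u. u \<in> N}) \<union> {{p 0, u} | u. u \<in> N}"
  unfolding E'_def moved_edges_def N_def ..

lemma finite_S: "finite S"
  using B_subset_V simple unfolding S_def simple_graph_def by (auto intro: finite_subset)

lemma finite_Union_induced_S: "finite (\<Union>(induced F S))"
  using finite_Union_induced[OF finite_S] .

lemma path_edges_subset_G: "path_edges ps \<subseteq> G"
  using path_edges_subset_E path_edges_subset_set unfolding induced_def S_def by blast

lemma path_edges_subset_G': "path_edges ps \<subseteq> G'"
proof
  fix e assume e: "e \<in> path_edges ps"
  have "e \<notin> {{p k, u} | u. u \<in> N}"
    using path_edges_subset_set[OF e] N_notin_set_ps by blast
  then show "e \<in> G'"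
    using e path_edges_subset_G unfolding E'_eq induced_def by blast
qed

lemma G_nbr_p0:
  assumes "{p 0, v} \<in> G"
  shows "v = p 1"
proof (cases "{p 0, v} \<in> path_edges ps")
  case True
  then show ?thesis
    using path_edges_at[of 0 v] by simp
next
  case False
  with assms obtain u w where "{p 0, v} = {u, w}" "u \<in> B" "w \<in> B"
    unfolding induced_def by (auto elim: off_path_edge_in_B)
  with p0_notin_B show ?thesis
    by (auto simp: doubleton_eq_iff)
qed

lemma path_edges_snoc_ps: "path_edges (ps @ [b]) = insert {p k, b} (path_edges ps)"
proof -
  have "ps \<noteq> []"
    using length_ps by auto
  moreover have "last ps = p k"
    using last_conv_nth[OF \<open>ps \<noteq> []\<close>] length_ps by simp
  ultimately show ?thesis
    by (simp add: path_edges_snoc)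
qed

lemma list_flip_p: "i \<le> k \<Longrightarrow> list_flip ps (p i) = p (k - i)"
  using list_flip_nth[OF distinct_ps, of i] length_ps by simp

lemma list_flip_maps_G_to_G':
  assumes "e \<in> G"
  shows "list_flip ps ` e \<in> G'"
proof (cases "e \<in> path_edges ps")
  case True
  then show ?thesis
    using list_flip_path_edges[OF distinct_ps] path_edges_subset_G' by blast
next
  case off_path: False
  have eE: "e \<in> E" "e \<subseteq> S"
    using assms unfolding induced_def by auto
  obtain u v where e: "e = {u, v}" "u \<in> B" "v \<in> B"
    by (rule off_path_edge_in_B[OF eE off_path])
  show ?thesis
  proof (cases "p k \<in> e")
    case True
    then obtain w where w: "e = {p k, w}" "w \<in> B"
      using e by auto
    have "w \<noteq> p (k - 1)"
      using w(2) p_notin_B[of "k - 1"] k_pos by auto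
    then have "w \<in> N"
      using eE(1) w(1) unfolding N_def nbrs_def by (simp add: insert_commute)
    moreover have "list_flip ps ` e = {p 0, w}"
      using w(1) list_flip_p[of k] list_flip_notin[OF N_notin_set_ps[OF \<open>w \<in> N\<close>]] by simp
    moreover have "{p 0, w} \<subseteq> S"
      using p_in_set[of 0] w(2) unfolding S_def by simp
    ultimately show ?thesis
      unfolding E'_eq induced_def by blast
  next
    case False
    then have "u \<notin> set ps" "v \<notin> set ps"
      using e B_inter_set_ps by auto
    then have "list_flip ps ` e = e"
      using e(1) list_flip_notin[of u ps] list_flip_notin[of v ps] by simp
    moreover have "e \<notin> {{p k, u} | u. u \<in> N}"
      using False by blast
    ultimately show ?thesis
      using eE unfolding E'_eq induced_def by simp
  qed
qed

lemma G_edge_at_left_in_path_edges: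
  assumes "i < k" "{p i, v} \<in> G"
  shows "{p i, v} \<in> path_edges ps"
proof (cases "i = 0")
  case True
  then show ?thesis
    using assms G_nbr_p0 path_edge[of 0] k_pos by auto
next
  case False
  then show ?thesis
    using assms inner_edge_in_path_edges[of i v] unfolding induced_def by auto
qed

lemma distinct_snoc_N: "b \<in> N \<Longrightarrow> distinct (ps @ [b])"
  using distinct_ps N_notin_set_ps by simp

lemma path_edges_snoc_N_subset_G:
  assumes "b \<in> N"
  shows "path_edges (ps @ [b]) \<subseteq> G"
proof -
  have "{p k, b} \<in> G"
    using edge_pk_N[OF assms] N_in_B[OF assms] p_in_set[of k] unfolding induced_def S_def by simp
  then show ?thesis
    using path_edges_subset_G unfolding path_edges_snoc_ps by blast
qed

lemma list_flip_snoc_N_p: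
  assumes "b \<in> N" "1 \<le> i" "i \<le> k"
  shows "list_flip (ps @ [b]) (p i) = p (Suc k - i)"
proof -
  have "list_flip (ps @ [b]) ((ps @ [b]) ! i) = (ps @ [b]) ! (Suc k - i)"
    using list_flip_nth[OF distinct_snoc_N[OF assms(1)], of i] assms(3) length_ps by simp
  then show ?thesis
    using assms(2,3) length_ps by (simp add: nth_append)
qed

lemma list_flip_snoc_N_maps_left_edge:
  assumes "b \<in> N" "i < k" "{p i, v} \<in> G"
  shows "(v = p (Suc i) \<or> v = p (i - 1)) \<and> {list_flip (ps @ [b]) (p i), list_flip (ps @ [b]) v} \<in> G"
proof
  have on_path: "{p i, v} \<in> path_edges ps"
    using G_edge_at_left_in_path_edges[OF assms(2,3)] .
  then show "v = p (Suc i) \<or> v = p (i - 1)"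
    using path_edges_at[of i v] assms(2) by auto
  have "list_flip (ps @ [b]) ` {p i, v} \<in> path_edges (ps @ [b])"
    using list_flip_path_edges[OF distinct_snoc_N[OF assms(1)]] on_path
    unfolding path_edges_snoc_ps by blast
  then show "{list_flip (ps @ [b]) (p i), list_flip (ps @ [b]) v} \<in> G"
    using path_edges_snoc_N_subset_G[OF assms(1)] by (simp add: subset_iff)
qed

lemma num_walks_p1_le_pk:
  assumes "odd k" "N \<noteq> {}"
  shows "num_walks l (p 1) G \<le> num_walks l (p k) G"
proof (cases "k = 1")
  case False
  obtain b where b: "b \<in> N"
    using assms(2) by blast
  define c where "c = Suc k div 2"
  define f where "f = list_flip (ps @ [b])"
  define L where "L = p ` {..<c}"
  \<comment> \<open>reflecting the path p 0 \<dots> p k b of G about its middle vertex p c swaps p 1 and p k\<close>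
  have c: "Suc k - c = c" "2 \<le> c" "c < k"
    using assms(1) False k_pos unfolding c_def by presburger+
  have "f (f v) = v" for v
    using list_flip_list_flip[OF distinct_snoc_N[OF b]] unfolding f_def .
  moreover have "f (p c) = p c"
    using list_flip_snoc_N_p[OF b, of c] c unfolding f_def by simp
  moreover have "(v \<in> L \<or> v = p c) \<and> {f u, f v} \<in> G" if "u \<in> L" "{u, v} \<in> G" for u v
  proof -
    obtain i where i: "i < c" "u = p i"
      using \<open>u \<in> L\<close> unfolding L_def by blast
    moreover have "Suc i < c \<or> Suc i = c" "i - 1 < c"
      using i by auto
    ultimately show ?thesis
      using list_flip_snoc_N_maps_left_edge[OF b, of i v] that(2) c
      unfolding L_def f_def by auto
  qed
  moreover have "p c \<notin> L"
  proof
    assume "p c \<in> L"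
    then obtain j where "j < c" "p c = p j"
      unfolding L_def by blast
    with p_eq_iff[of c j] c show False
      by simp
  qed
  moreover have "p 1 \<in> L"
    using c unfolding L_def by simp
  ultimately have "num_walks l (p 1) G \<le> num_walks l (f (p 1)) G"
    by (intro num_walks_le_reflect[OF finite_Union_induced_S, of f "p c" L])
  also have "f (p 1) = p k"
    using list_flip_snoc_N_p[OF b, of 1] k_pos unfolding f_def by simp
  finally show ?thesis .
qed (simp only: order.refl)

lemma num_walks_G_le_G':
  assumes "odd k" "1 \<le> l"
  shows "num_walks l (p 0) G \<le> num_walks l (p 0) G'"
proof (cases "N = {}")
  case True
  then show ?thesis
    unfolding E'_eq by simp
next
  case False
  obtain l' where l: "l = Suc l'"
    using assms(2) by (cases l) auto
  have last_edge: "{p k, p (k - 1)} \<in> G"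
    using path_edge[of "k - 1"] path_edges_subset_G k_pos by (auto simp: insert_commute)
  have flip_hom: "{list_flip ps u, list_flip ps v} \<in> G'"
    if "{u, v} \<in> G" for u v
    using list_flip_maps_G_to_G'[OF that] by simp
  have "num_walks (Suc l') (p 0) G \<le> num_walks l' (p 1) G"
    using num_walks_Suc_le_unique_nbr[OF finite_Union_induced_S G_nbr_p0] .
  also have "\<dots> \<le> num_walks l' (p k) G"
    using num_walks_p1_le_pk[OF assms(1) False] .
  also have "\<dots> \<le> num_walks (Suc l') (p k) G"
    using num_walks_le_Suc[OF finite_Union_induced_S last_edge] .
  also have "\<dots> \<le> num_walks (Suc l') (list_flip ps (p k)) G'"
    using num_walks_le_hom[OF finite_Union_induced_S inj_list_flip[OF distinct_ps] flip_hom] .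
  also have "list_flip ps (p k) = p 0"
    using list_flip_p[of k] by simp
  finally show ?thesis
    unfolding l .
qed

end

theorem corollary4:
  fixes V :: "'a set" and E :: "'a set set" and ps :: "'a list" and k l :: nat
  assumes "is_tree V E"
    and "is_path V E ps" and "length ps = Suc k" and "k \<ge> 1"
    and "\<And>i. 1 \<le> i \<Longrightarrow> i \<le> k - 1 \<Longrightarrow> degree E (ps ! i) = 2"
    and "odd k" and "l \<ge> 1"
  shows "let B = component V (E - path_edges ps) (ps ! k);
             E' = moved_edges E (ps ! 0) (ps ! (k - 1)) (ps ! k);
             S = B \<union> set ps
         in int (num_walks l (ps ! 0) (induced E S)) - int (num_walks l (ps ! 0) (path_edges ps))
            \<le> int (num_walks l (ps ! 0) (induced E' S)) - int (num_walks l (ps ! 0) (path_edges ps))"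
proof -
  interpret bare_path_in_tree V E ps k
    using assms(1-5) by unfold_locales
  show ?thesis
    using num_walks_G_le_G'[OF assms(6,7)] unfolding Let_def B_def E'_def S_def by simp
qed

end
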